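(* Let $C$ be an $A$-code of length $l$ having a basis of divisors consisting of one element. Then $C$ is isodual if and only if $l\le 2$ and either $C$ is self-dual ($C=C^\perp$) or $C=C^{\perp R}$.
   Context: Let $\mathbb{F}$ be a finite field, $f(x)\in\mathbb{F}[x]$ monic of degree $m$, $A=\mathbb{F}[x]/\langle f(x)\rangle$. An $A$-code of length $l$ is an $A$-submodule of $A^l$; $C^\perp=\{a\in A^l:\sum_ia_ic_i=0\ \forall c\in C\}$ and $C^{\perp R}=\{(c_l,\ldots,c_1):(c_1,\ldots,c_l)\in C^\perp\}$. $C$ is isodual if $C^\perp$ is the image of $C$ under some permutation of coordinates. For $u\in A^l$, $L_{\mathrm{ind}}(u)$ is the smallest index of a nonzero entry and $L_{\mathrm{coef}}(u)$ that entry. For nonzero $C$, $L_{\mathrm{ind}}(C)=\min_{u\in C}L_{\mathrm{ind}}(u)$; $L_{\mathrm{coef}}(C)$ is the monic polynomial $g$ of minimum degree such that some $c\in C$ has $L_{\mathrm{ind}}(c)=L_{\mathrm{ind}}(C)$ and $L_{\mathrm{coef}}(c)=g$ (such $c$ is a leading element). $C^{(1)}=C$, $C^{(n+1)}=\{c\in C^{(n)}:L_{\mathrm{ind}}(c)>L_{\mathrm{ind}}(C^{(n)})\}$ while $C^{(n)}\ne0$; with $k$ largest such that $C^{(k)}\ne0$, a tuple $(g^{(1)},\dots,g^{(k)})$ with $g^{(j)}$ a leading element of $C^{(j)}$ is a basis of divisors. *)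

theory Defs
  imports "HOL-Computational_Algebra.Polynomial" "HOL-Combinatorics.Permutations"
begin

text \<open>The ring A = F[x]/(f) is represented by canonical representatives:
  polynomials p with p mod f = p; multiplication is reduced mod f.
  Vectors in A^l are functions nat => 'a poly, coordinates 0..l-1 (the
  paper's coordinates 1..l shifted by one), zero outside.\<close>

definition ringA :: "'a::field poly \<Rightarrow> 'a poly set" where
  "ringA f = {p. p mod f = p}"

definition vecs :: "'a::field poly \<Rightarrow> nat \<Rightarrow> (nat \<Rightarrow> 'a poly) set" where
  "vecs f l = {u. (\<forall>i<l. u i \<in> ringA f) \<and> (\<forall>i\<ge>l. u i = 0)}"

definition smultA :: "'a::field poly \<Rightarrow> 'a poly \<Rightarrow> (nat \<Rightarrow> 'a poly) \<Rightarrow> (nat \<Rightarrow> 'a poly)" where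
  "smultA f a u = (\<lambda>i. (a * u i) mod f)"

definition is_A_code :: "'a::field poly \<Rightarrow> nat \<Rightarrow> (nat \<Rightarrow> 'a poly) set \<Rightarrow> bool" where
  "is_A_code f l C \<longleftrightarrow> C \<subseteq> vecs f l \<and> (\<lambda>_. 0) \<in> C \<and>
     (\<forall>u\<in>C. \<forall>v\<in>C. (\<lambda>i. u i + v i) \<in> C) \<and>
     (\<forall>a\<in>ringA f. \<forall>u\<in>C. smultA f a u \<in> C)"

definition dual :: "'a::field poly \<Rightarrow> nat \<Rightarrow> (nat \<Rightarrow> 'a poly) set \<Rightarrow> (nat \<Rightarrow> 'a poly) set" where
  "dual f l C = {a \<in> vecs f l. \<forall>c\<in>C. (\<Sum>i<l. a i * c i) mod f = 0}"

definition revvec :: "nat \<Rightarrow> (nat \<Rightarrow> 'a::zero) \<Rightarrow> (nat \<Rightarrow> 'a)" where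
  "revvec l u = (\<lambda>i. if i < l then u (l - 1 - i) else 0)"

definition dualR :: "'a::field poly \<Rightarrow> nat \<Rightarrow> (nat \<Rightarrow> 'a poly) set \<Rightarrow> (nat \<Rightarrow> 'a poly) set" where
  "dualR f l C = revvec l ` dual f l C"

definition isodual :: "'a::field poly \<Rightarrow> nat \<Rightarrow> (nat \<Rightarrow> 'a poly) set \<Rightarrow> bool" where
  "isodual f l C \<longleftrightarrow> (\<exists>\<sigma>. \<sigma> permutes {..<l} \<and> dual f l C = (\<lambda>c. c \<circ> \<sigma>) ` C)"

definition Lind :: "(nat \<Rightarrow> 'a::zero) \<Rightarrow> nat" where
  "Lind u = (LEAST i. u i \<noteq> 0)"

definition LindC :: "(nat \<Rightarrow> 'a::zero) set \<Rightarrow> nat" where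
  "LindC C = (LEAST j. \<exists>u\<in>C. u \<noteq> (\<lambda>_. 0) \<and> Lind u = j)"

definition next_code :: "(nat \<Rightarrow> 'a::zero) set \<Rightarrow> (nat \<Rightarrow> 'a) set" where
  "next_code C = {c \<in> C. c = (\<lambda>_. 0) \<or> Lind c > LindC C}"

text \<open>filt C n = C^(n) for n \<ge> 1.\<close>
definition filt :: "(nat \<Rightarrow> 'a::zero) set \<Rightarrow> nat \<Rightarrow> (nat \<Rightarrow> 'a) set" where
  "filt C n = (next_code ^^ (n - 1)) C"

definition nonzero_code :: "(nat \<Rightarrow> 'a::zero) set \<Rightarrow> bool" where
  "nonzero_code C \<longleftrightarrow> (\<exists>u\<in>C. u \<noteq> (\<lambda>_. 0))"

text \<open>A basis of divisors has k elements, k the largest index with C^(k) nonzero.\<close>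
definition basis_of_divisors_size :: "(nat \<Rightarrow> 'a::zero) set \<Rightarrow> nat \<Rightarrow> bool" where
  "basis_of_divisors_size C k \<longleftrightarrow> k \<ge> 1 \<and> nonzero_code (filt C k) \<and> \<not> nonzero_code (filt C (k + 1))"

end

theory Submission
  imports Defs
begin

(* All nonzero codewords have the same leading position j, so C is generated by a single word g,
   one of least degree at position j. If the coordinate permutation sigma maps C onto C^perp, every
   nonzero word of C^perp is nonzero at position sigma^-1 j. For l >= 3 this is impossible: on two
   further positions p, q there is a nonzero vector orthogonal to g, namely (g q, - g p), or a
   multiple of the p-th unit vector if g p = 0. For l <= 2 the only permutations are the identity
   and the reversal, which give C = C^perp and C = C^perpR. *)

lemma A_code_mod:
  assumes "is_A_code f l C" and "c \<in> C"
  shows "c i mod f = c i"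
  using assms unfolding is_A_code_def vecs_def ringA_def by (cases "i < l") auto

lemma smultA_mod: "smultA f (a mod f) u = smultA f a u"
  by (simp add: smultA_def mod_mult_left_eq)

lemma A_code_smultA:
  assumes "is_A_code f l C" and "u \<in> C"
  shows "smultA f a u \<in> C"
proof -
  have "a mod f \<in> ringA f" by (simp add: ringA_def)
  then show ?thesis
    using assms smultA_mod[of f a u] unfolding is_A_code_def by metis
qed

lemma A_code_diff:
  assumes "is_A_code f l C" and "u \<in> C" and "v \<in> C"
  shows "(\<lambda>i. u i - v i) \<in> C"
proof -
  have "smultA f (- 1) v \<in> C" using A_code_smultA assms(1,3) .
  then have "(\<lambda>i. u i + smultA f (- 1) v i) \<in> C"
    using assms unfolding is_A_code_def by blast
  moreover have "v i mod f = v i" for i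
    using assms(1,3) unfolding is_A_code_def vecs_def ringA_def by (cases "i < l") auto
  ultimately show ?thesis by (simp add: smultA_def)
qed

lemma Lind_nonzero: "u \<noteq> (\<lambda>_. 0) \<Longrightarrow> u (Lind u) \<noteq> 0"
  unfolding Lind_def by (metis (mono_tags) LeastI)

lemma basis_of_divisors_size_1_nonzero: "basis_of_divisors_size C 1 \<Longrightarrow> nonzero_code C"
  by (simp add: basis_of_divisors_size_def filt_def)

lemma basis_of_divisors_size_1_leading:
  assumes "basis_of_divisors_size C 1"
  shows "\<forall>c\<in>C. c \<noteq> (\<lambda>_. 0) \<longrightarrow> c (LindC C) \<noteq> 0"
proof (intro ballI impI)
  fix c assume c: "c \<in> C" "c \<noteq> (\<lambda>_. 0)"
  then have "LindC C \<le> Lind c" unfolding LindC_def by (auto intro: Least_le)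
  moreover have "\<not> LindC C < Lind c"
    using assms c unfolding basis_of_divisors_size_def filt_def nonzero_code_def next_code_def by auto
  ultimately show "c (LindC C) \<noteq> 0" using Lind_nonzero[OF c(2)] by simp
qed

lemma mod_mod_of_reduced:
  fixes r g f :: "'a::field poly"
  assumes "g mod f = g" and "g \<noteq> 0"
  shows "(r mod g) mod f = r mod g"
proof (cases "f = 0 \<or> r mod g = 0")
  case False
  then have "degree g < degree f" using assms degree_mod_less[of f g] by auto
  moreover have "degree (r mod g) < degree g" using False assms(2) degree_mod_less[of g r] by auto
  ultimately show ?thesis by (simp add: mod_poly_less)
qed auto

(* A word g of least degree at position j generates C: subtracting a multiple of g from c leaves
   a codeword whose j-th entry is the remainder of c j modulo g j, hence zero. *)
lemma A_code_principal:
  fixes f :: "'a::field poly"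
  assumes code: "is_A_code f l C" and nz: "nonzero_code C"
    and lead: "\<forall>c\<in>C. c \<noteq> (\<lambda>_. 0) \<longrightarrow> c j \<noteq> 0"
  shows "\<exists>g\<in>C. g \<noteq> (\<lambda>_. 0) \<and> C \<subseteq> range (\<lambda>q. smultA f q g)"
proof -
  obtain g where g: "g \<in> C" "g \<noteq> (\<lambda>_. 0)"
    and gmin: "\<And>c. c \<in> C \<and> c \<noteq> (\<lambda>_. 0) \<Longrightarrow> degree (g j) \<le> degree (c j)"
    using ex_has_least_nat[of "\<lambda>c. c \<in> C \<and> c \<noteq> (\<lambda>_. 0)" _ "\<lambda>c. degree (c j)"] nz
    unfolding nonzero_code_def by blast
  have gj: "g j \<noteq> 0" using lead g by blast
  have "c = smultA f (c j div g j) g" if c: "c \<in> C" for c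
  proof -
    define w where "w = (\<lambda>i. c i - smultA f (c j div g j) g i)"
    have wC: "w \<in> C" unfolding w_def using A_code_diff A_code_smultA code c g(1) by metis
    have "w j = (c j - (c j div g j * g j) mod f) mod f"
      using A_code_mod[OF code wC, of j] by (simp add: w_def smultA_def)
    also have "\<dots> = (c j - c j div g j * g j) mod f"
      by (rule mod_diff_right_eq)
    also have "\<dots> = c j mod g j"
      using mod_mod_of_reduced[OF A_code_mod[OF code g(1)] gj] by (simp add: minus_div_mult_eq_mod)
    finally have wj: "w j = c j mod g j" .
    have "w = (\<lambda>_. 0)"
    proof (rule ccontr)
      assume "w \<noteq> (\<lambda>_. 0)"
      then have "w j \<noteq> 0" and "degree (g j) \<le> degree (w j)" using lead gmin wC by auto
      then show False using wj degree_mod_less[OF gj, of "c j"] by auto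
    qed
    then show ?thesis unfolding w_def fun_eq_iff by (metis eq_iff_diff_eq_0)
  qed
  then have "C \<subseteq> range (\<lambda>q. smultA f q g)" by (metis rangeI subsetI)
  then show ?thesis using g by blast
qed

lemma inner_smultA_mod:
  "(\<Sum>i<l. d i * smultA f q g i) mod f = (q * (\<Sum>i<l. d i * g i)) mod f"
proof -
  have "(\<Sum>i<l. d i * smultA f q g i) mod f = (\<Sum>i<l. (d i * ((q * g i) mod f)) mod f) mod f"
    by (simp add: smultA_def mod_sum_eq)
  also have "\<dots> = (\<Sum>i<l. d i * (q * g i)) mod f"
    by (simp only: mod_mult_right_eq mod_sum_eq)
  also have "(\<Sum>i<l. d i * (q * g i)) = q * (\<Sum>i<l. d i * g i)"
    by (simp add: sum_distrib_left mult.left_commute)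
  finally show ?thesis .
qed

lemma dual_of_principal:
  assumes gen: "C \<subseteq> range (\<lambda>q. smultA f q g)"
    and "d \<in> vecs f l" and orth: "(\<Sum>i<l. d i * g i) mod f = 0"
  shows "d \<in> dual f l C"
proof -
  have "(\<Sum>i<l. d i * c i) mod f = 0" if c: "c \<in> C" for c
  proof -
    obtain q where "c = smultA f q g" using gen c by blast
    then have "(\<Sum>i<l. d i * c i) mod f = (q * ((\<Sum>i<l. d i * g i) mod f)) mod f"
      by (simp add: inner_smultA_mod mod_mult_right_eq)
    then show ?thesis using orth by simp
  qed
  then show ?thesis unfolding dual_def using assms(2) by blast
qed

lemma exists_orthogonal_vanishing_at:
  fixes g :: "nat \<Rightarrow> 'a::field poly"
  assumes "3 \<le> l" and g: "g \<in> vecs f l" "g \<noteq> (\<lambda>_. 0)"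
  obtains d where "d \<in> vecs f l" "d \<noteq> (\<lambda>_. 0)" "d k = 0" "(\<Sum>i<l. d i * g i) = 0"
proof -
  define p where "p = (if k = 0 then 1 else 0 :: nat)"
  define q where "q = (if k \<le> 1 then 2 else 1 :: nat)"
  have pq: "p < l" "q < l" "p \<noteq> q" "p \<noteq> k" "q \<noteq> k"
    using assms(1) by (auto simp: p_def q_def)
  have gA: "g i \<in> ringA f" if "i < l" for i using g(1) that unfolding vecs_def by blast
  show ?thesis
  proof (cases "g p = 0")
    case True
    obtain a where a: "g a \<noteq> 0" using g(2) by auto
    have "a < l" using g(1) a unfolding vecs_def by (metis (mono_tags) mem_Collect_eq not_le)
    define d where "d = (\<lambda>i. if i = p then g a else 0)"
    show ?thesis
    proof (rule that)
      show "d \<in> vecs f l" using gA \<open>a < l\<close> pq by (auto simp: d_def vecs_def ringA_def)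
      show "d \<noteq> (\<lambda>_. 0)" using a by (auto simp: d_def fun_eq_iff)
      show "(\<Sum>i<l. d i * g i) = 0" by (rule sum.neutral) (auto simp: d_def True)
    qed (use pq in \<open>simp add: d_def\<close>)
  next
    case False
    define d where "d = (\<lambda>i. if i = p then g q else if i = q then - g p else 0)"
    show ?thesis
    proof (rule that)
      show "d \<in> vecs f l" using gA pq by (auto simp: d_def vecs_def ringA_def)
      show "d \<noteq> (\<lambda>_. 0)" using False pq by (auto simp: d_def fun_eq_iff)
      have "(\<Sum>i<l. d i * g i) = (\<Sum>i\<in>{p, q}. d i * g i)"
        by (rule sum.mono_neutral_right) (use pq in \<open>auto simp: d_def\<close>)
      also have "\<dots> = 0" using pq by (simp add: d_def)
      finally show "(\<Sum>i<l. d i * g i) = 0" .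
    qed (use pq in \<open>simp add: d_def\<close>)
  qed
qed

lemma isodual_dual_nonzero_at:
  assumes "\<sigma> permutes {..<l}" and "dual f l C = (\<lambda>c. c \<circ> \<sigma>) ` C"
    and lead: "\<forall>c\<in>C. c \<noteq> (\<lambda>_. 0) \<longrightarrow> c j \<noteq> 0"
    and "d \<in> dual f l C" "d \<noteq> (\<lambda>_. 0)"
  shows "d (inv \<sigma> j) \<noteq> 0"
proof -
  obtain c where c: "c \<in> C" "d = c \<circ> \<sigma>" using assms(2,4) by blast
  then have "c \<noteq> (\<lambda>_. 0)" using assms(5) by auto
  then show ?thesis using lead c permutes_inverses(1)[OF assms(1)] by simp
qed

lemma isodual_length_le_2:
  fixes f :: "'a::field poly"
  assumes code: "is_A_code f l C" and nz: "nonzero_code C"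
    and lead: "\<forall>c\<in>C. c \<noteq> (\<lambda>_. 0) \<longrightarrow> c j \<noteq> 0"
    and "isodual f l C"
  shows "l \<le> 2"
proof (rule ccontr)
  assume "\<not> l \<le> 2"
  obtain g where g: "g \<in> C" "g \<noteq> (\<lambda>_. 0)" and gen: "C \<subseteq> range (\<lambda>q. smultA f q g)"
    using A_code_principal[OF code nz lead] by blast
  obtain \<sigma> where \<sigma>: "\<sigma> permutes {..<l}" "dual f l C = (\<lambda>c. c \<circ> \<sigma>) ` C"
    using assms(4) unfolding isodual_def by blast
  have "3 \<le> l" using \<open>\<not> l \<le> 2\<close> by simp
  moreover have "g \<in> vecs f l" using code g(1) unfolding is_A_code_def by blast
  ultimately obtain d
    where d: "d \<in> vecs f l" "d \<noteq> (\<lambda>_. 0)" "d (inv \<sigma> j) = 0" "(\<Sum>i<l. d i * g i) = 0"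
    using g(2) by (rule exists_orthogonal_vanishing_at)
  have dual_d: "d \<in> dual f l C" using gen d(1) by (rule dual_of_principal) (simp add: d(4))
  have "d (inv \<sigma> j) \<noteq> 0" by (rule isodual_dual_nonzero_at[OF \<sigma> lead dual_d d(2)])
  then show False using d(3) by contradiction
qed

definition reverse_perm :: "nat \<Rightarrow> nat \<Rightarrow> nat" where
  "reverse_perm l i = (if i < l then l - 1 - i else i)"

lemma reverse_perm_permutes: "reverse_perm l permutes {..<l}"
proof -
  have "reverse_perm l (reverse_perm l i) = i" for i
    by (simp add: reverse_perm_def)
  then show ?thesis
    unfolding permutes_def by (metis lessThan_iff reverse_perm_def)
qed

lemma permutes_lessThan_le_2:
  assumes "l \<le> 2" and "\<sigma> permutes {..<l}"
  shows "\<sigma> = id \<or> \<sigma> = reverse_perm l"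
proof -
  consider "l = 0" | "l = 1" | "l = 2" using assms(1) by linarith
  then show ?thesis
  proof cases
    case 3
    have "{..<l} = {0, 1}" using 3 by auto
    moreover have "Transposition.transpose 0 1 = reverse_perm 2"
      by (auto simp: fun_eq_iff reverse_perm_def transpose_def)
    ultimately show ?thesis using assms(2) 3 by (simp add: permutes_doubleton_iff)
  qed (use assms(2) lessThan_Suc in auto)
qed

lemma comp_reverse_perm: "c \<in> vecs f l \<Longrightarrow> c \<circ> reverse_perm l = revvec l c"
  by (auto simp: fun_eq_iff reverse_perm_def revvec_def vecs_def)

lemma revvec_revvec: "c \<in> vecs f l \<Longrightarrow> revvec l (revvec l c) = c"
  by (auto simp: fun_eq_iff revvec_def vecs_def)

lemma revvec_image_involutive:
  assumes "A \<subseteq> vecs f l"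
  shows "revvec l ` revvec l ` A = A"
proof -
  have "revvec l ` revvec l ` A = (\<lambda>c. revvec l (revvec l c)) ` A" by (simp add: image_image)
  also have "\<dots> = (\<lambda>c. c) ` A" using assms revvec_revvec by (intro image_cong) auto
  finally show ?thesis by simp
qed

lemma dual_eq_reversed_iff:
  assumes "C \<subseteq> vecs f l"
  shows "dual f l C = (\<lambda>c. c \<circ> reverse_perm l) ` C \<longleftrightarrow> C = dualR f l C"
proof -
  have "(\<lambda>c. c \<circ> reverse_perm l) ` C = revvec l ` C"
    using assms comp_reverse_perm by (metis (no_types, lifting) image_cong subsetD)
  moreover have "dual f l C \<subseteq> vecs f l" unfolding dual_def by blast
  ultimately show ?thesis
    unfolding dualR_def using revvec_image_involutive assms by metis
qed

theorem mainTheorem5: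
  fixes f :: "'a::{finite,field} poly" and l :: nat
    and C :: "(nat \<Rightarrow> 'a poly) set"
  assumes "lead_coeff f = 1"
    and "is_A_code f l C"
    and "basis_of_divisors_size C 1"
  shows "isodual f l C \<longleftrightarrow> l \<le> 2 \<and> (C = dual f l C \<or> C = dualR f l C)"
proof -
  have vecs: "C \<subseteq> vecs f l" using assms(2) unfolding is_A_code_def by blast
  show ?thesis
  proof
    assume iso: "isodual f l C"
    have l: "l \<le> 2"
      using isodual_length_le_2[OF assms(2) basis_of_divisors_size_1_nonzero[OF assms(3)]
          basis_of_divisors_size_1_leading[OF assms(3)] iso] .
    obtain \<sigma> where \<sigma>: "\<sigma> permutes {..<l}" and dual: "dual f l C = (\<lambda>c. c \<circ> \<sigma>) ` C"
      using iso unfolding isodual_def by blast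
    from permutes_lessThan_le_2[OF l \<sigma>] have "C = dual f l C \<or> C = dualR f l C"
      using dual dual_eq_reversed_iff[OF vecs] by auto
    with l show "l \<le> 2 \<and> (C = dual f l C \<or> C = dualR f l C)" ..
  next
    assume "l \<le> 2 \<and> (C = dual f l C \<or> C = dualR f l C)"
    then consider "dual f l C = (\<lambda>c. c \<circ> id) ` C" | "dual f l C = (\<lambda>c. c \<circ> reverse_perm l) ` C"
      using dual_eq_reversed_iff[OF vecs] by auto
    then show "isodual f l C"
      unfolding isodual_def by (metis permutes_id reverse_perm_permutes)
  qed
qed

end
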